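(* For every conservative reaction network $(X,\mathscr{R})$ there exists an injective Lewis realization $x\mapsto\Gamma_x$, i.e. a Lewis realization in which distinct compounds $x\neq y$ are assigned non-isomorphic vertex-coloured multigraphs $\Gamma_x,\Gamma_y$.
   Context: A reaction network (RN) $(X,\mathscr{R})$ consists of a finite non-empty set $X$ of species and a finite non-empty set $\mathscr{R}$ of reactions. Each reaction $r$ is given by stoichiometric coefficients $s^-_{xr},s^+_{xr}\in\mathbb{N}_0$. The stoichiometric matrix $S\in\mathbb{Z}^{X\times\mathscr{R}}$ has entries $S_{xr}=s^+_{xr}-s^-_{xr}$. The paper assumes throughout that RNs are closed: every reaction $r$ has $x,y$ with $S_{xr}<0<S_{yr}$. The RN is conservative if there is $m\in\mathbb{R}^X$ with all entries positive and $m^\top S=0$. An sf-instance is a matrix $A\in\mathbb{N}_0^{\mathcal{A}\times X}$ ($\mathcal{A}$ a non-empty finite set) with every column nonzero and $AS=0$. An sf-realization is an sf-instance with $\operatorname{im}A^\top=\ker S^\top$. Given $\mathrm{val}:\mathcal{A}\to\mathbb{N}=\{1,2,\dots\}$, consider multigraphs (loops allowed) with vertex colouring $\alpha:V\to\mathcal{A}$. The degree $d(u)$ is the number of non-loop edge incidences at $u$ plus twice the number of loops at $u$. A Lewis instance assigns vertex-coloured multigraphs $\Gamma_x=(V_x,E_x,\alpha_x)$ to all $x\in X$ such that: - $d(u)=\mathrm{val}(\alpha_x(u))$ for all $u\in V_x$; - the matrix $A_{ax}=|\{u\in V_x:\alpha_x(u)=a\}|$ is an sf-instance. It is a Lewis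 realization if this $A$ is an sf-realization. *)

theory Defs
  imports Complex_Main "HOL-Library.Multiset"
begin

text \<open>A reaction network is given by finite non-empty carriers X (species) and R (reactions)
  and stoichiometric coefficients sm x r (= s^-_{xr}) and sp x r (= s^+_{xr}).\<close>

definition stoich :: "('x \<Rightarrow> 'r \<Rightarrow> nat) \<Rightarrow> ('x \<Rightarrow> 'r \<Rightarrow> nat) \<Rightarrow> 'x \<Rightarrow> 'r \<Rightarrow> int" where
  "stoich sm sp x r = int (sp x r) - int (sm x r)"

definition reaction_network :: "'x set \<Rightarrow> 'r set \<Rightarrow> bool" where
  "reaction_network X R \<longleftrightarrow> finite X \<and> X \<noteq> {} \<and> finite R \<and> R \<noteq> {}"

definition closed_RN :: "'x set \<Rightarrow> 'r set \<Rightarrow> ('x \<Rightarrow> 'r \<Rightarrow> nat) \<Rightarrow> ('x \<Rightarrow> 'r \<Rightarrow> nat) \<Rightarrow> bool" where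
  "closed_RN X R sm sp \<longleftrightarrow>
     (\<forall>r\<in>R. \<exists>x\<in>X. \<exists>y\<in>X. stoich sm sp x r < 0 \<and> 0 < stoich sm sp y r)"

definition conservative :: "'x set \<Rightarrow> 'r set \<Rightarrow> ('x \<Rightarrow> 'r \<Rightarrow> nat) \<Rightarrow> ('x \<Rightarrow> 'r \<Rightarrow> nat) \<Rightarrow> bool" where
  "conservative X R sm sp \<longleftrightarrow>
     (\<exists>m :: 'x \<Rightarrow> real. (\<forall>x\<in>X. 0 < m x) \<and>
        (\<forall>r\<in>R. (\<Sum>x\<in>X. m x * real_of_int (stoich sm sp x r)) = 0))"

definition sf_instance :: "'x set \<Rightarrow> 'r set \<Rightarrow> ('x \<Rightarrow> 'r \<Rightarrow> nat) \<Rightarrow> ('x \<Rightarrow> 'r \<Rightarrow> nat)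
    \<Rightarrow> 'a set \<Rightarrow> ('a \<Rightarrow> 'x \<Rightarrow> nat) \<Rightarrow> bool" where
  "sf_instance X R sm sp Atoms A \<longleftrightarrow>
     finite Atoms \<and> Atoms \<noteq> {} \<and>
     (\<forall>x\<in>X. \<exists>a\<in>Atoms. A a x \<noteq> 0) \<and>
     (\<forall>a\<in>Atoms. \<forall>r\<in>R. (\<Sum>x\<in>X. int (A a x) * stoich sm sp x r) = 0)"

definition sf_realization :: "'x set \<Rightarrow> 'r set \<Rightarrow> ('x \<Rightarrow> 'r \<Rightarrow> nat) \<Rightarrow> ('x \<Rightarrow> 'r \<Rightarrow> nat)
    \<Rightarrow> 'a set \<Rightarrow> ('a \<Rightarrow> 'x \<Rightarrow> nat) \<Rightarrow> bool" where
  "sf_realization X R sm sp Atoms A \<longleftrightarrow>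
     sf_instance X R sm sp Atoms A \<and>
     (\<forall>v :: 'x \<Rightarrow> real.
        (\<exists>y :: 'a \<Rightarrow> real. \<forall>x\<in>X. v x = (\<Sum>a\<in>Atoms. y a * real (A a x)))
        \<longleftrightarrow> (\<forall>r\<in>R. (\<Sum>x\<in>X. v x * real_of_int (stoich sm sp x r)) = 0))"

text \<open>Edges form a multiset of 2-element multisets of vertices; a loop at u is {#u,u#}.\<close>

record ('v, 'a) cmgraph =
  verts :: "'v set"
  edges :: "'v multiset multiset"
  colour :: "'v \<Rightarrow> 'a"

definition wf_cmgraph :: "('v, 'a) cmgraph \<Rightarrow> bool" where
  "wf_cmgraph G \<longleftrightarrow> finite (verts G) \<and>
     (\<forall>e\<in>#edges G. size e = 2 \<and> set_mset e \<subseteq> verts G)"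

text \<open>Degree: non-loop incidences plus twice the number of loops.\<close>

definition degree :: "('v, 'a) cmgraph \<Rightarrow> 'v \<Rightarrow> nat" where
  "degree G u = (\<Sum>e\<in>#edges G. count e u)"

definition cmg_iso :: "('v, 'a) cmgraph \<Rightarrow> ('v, 'a) cmgraph \<Rightarrow> bool" where
  "cmg_iso G H \<longleftrightarrow> (\<exists>f. bij_betw f (verts G) (verts H) \<and>
      (\<forall>u\<in>verts G. colour H (f u) = colour G u) \<and>
      image_mset (image_mset f) (edges G) = edges H)"

definition lewis_matrix :: "('x \<Rightarrow> ('v, 'a) cmgraph) \<Rightarrow> 'a \<Rightarrow> 'x \<Rightarrow> nat" where
  "lewis_matrix \<Gamma> a x = card {u \<in> verts (\<Gamma> x). colour (\<Gamma> x) u = a}"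

definition lewis_instance :: "'x set \<Rightarrow> 'r set \<Rightarrow> ('x \<Rightarrow> 'r \<Rightarrow> nat) \<Rightarrow> ('x \<Rightarrow> 'r \<Rightarrow> nat)
    \<Rightarrow> 'a set \<Rightarrow> ('a \<Rightarrow> nat) \<Rightarrow> ('x \<Rightarrow> ('v, 'a) cmgraph) \<Rightarrow> bool" where
  "lewis_instance X R sm sp Atoms val \<Gamma> \<longleftrightarrow>
     (\<forall>a\<in>Atoms. 1 \<le> val a) \<and>
     (\<forall>x\<in>X. wf_cmgraph (\<Gamma> x) \<and> colour (\<Gamma> x) ` verts (\<Gamma> x) \<subseteq> Atoms \<and>
        (\<forall>u\<in>verts (\<Gamma> x). degree (\<Gamma> x) u = val (colour (\<Gamma> x) u))) \<and>
     sf_instance X R sm sp Atoms (lewis_matrix \<Gamma>)"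

definition lewis_realization :: "'x set \<Rightarrow> 'r set \<Rightarrow> ('x \<Rightarrow> 'r \<Rightarrow> nat) \<Rightarrow> ('x \<Rightarrow> 'r \<Rightarrow> nat)
    \<Rightarrow> 'a set \<Rightarrow> ('a \<Rightarrow> nat) \<Rightarrow> ('x \<Rightarrow> ('v, 'a) cmgraph) \<Rightarrow> bool" where
  "lewis_realization X R sm sp Atoms val \<Gamma> \<longleftrightarrow>
     lewis_instance X R sm sp Atoms val \<Gamma> \<and>
     sf_realization X R sm sp Atoms (lewis_matrix \<Gamma>)"

end

(* Eliminating the reactions one at a time yields integer vectors W_0, ..., W_(n-1) that span the
   left kernel of the stoichiometric matrix over the reals.  A positive conservation law is a real
   combination of them; scaling and rounding its coefficients gives a positive integer conservation
   law p.  For N large and d = 2|X| the rows d p and W_i + N p are non-negative, lie in the kernel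
   and still span it, so they form an sf-realization with atoms 0, ..., n.

   Every atom gets valence 2, and compound x is drawn as a disjoint union of loops and double edges
   with the prescribed colour counts in which exactly 2 idx(x) vertices of colour 0 carry a loop,
   for an injective numbering idx of the compounds (d = 2|X| leaves room for this and keeps the
   remaining colour-0 vertices even in number).  The number of loops at colour-0 vertices is an
   isomorphism invariant, so distinct compounds receive non-isomorphic graphs. *)

theory Submission
  imports Defs "HOL-Library.Nat_Bijection"
begin

section \<open>Integer vectors in a left kernel\<close>

definition left_kernel :: "'x set \<Rightarrow> 'r set \<Rightarrow> ('x \<Rightarrow> 'r \<Rightarrow> int) \<Rightarrow> ('x \<Rightarrow> 'a::comm_ring_1) set" where
  "left_kernel X R c = {v. \<forall>r\<in>R. (\<Sum>x\<in>X. v x * of_int (c x r)) = 0}"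

definition in_span_on :: "'x set \<Rightarrow> nat \<Rightarrow> (nat \<Rightarrow> 'x \<Rightarrow> int) \<Rightarrow> ('x \<Rightarrow> 'a::ring_1) \<Rightarrow> bool" where
  "in_span_on X n W v \<longleftrightarrow> (\<exists>t. \<forall>x\<in>X. v x = (\<Sum>i<n. t i * of_int (W i x)))"

lemma in_span_onI:
  "\<forall>x\<in>X. v x = (\<Sum>i<n. t i * of_int (W i x)) \<Longrightarrow> in_span_on X n W v"
  unfolding in_span_on_def by blast

lemma left_kernel_cong:
  "v \<in> left_kernel X R c \<Longrightarrow> (\<And>x. x \<in> X \<Longrightarrow> u x = v x) \<Longrightarrow> u \<in> left_kernel X R c"
  by (simp add: left_kernel_def cong: sum.cong)

lemma left_kernel_insert:
  "v \<in> left_kernel X (insert r R) c \<longleftrightarrow>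
     v \<in> left_kernel X R c \<and> (\<Sum>x\<in>X. v x * of_int (c x r)) = 0"
  by (auto simp: left_kernel_def)

lemma left_kernel_sum:
  assumes "\<And>i. i \<in> I \<Longrightarrow> w i \<in> left_kernel X R c"
  shows "(\<lambda>x. \<Sum>i\<in>I. k i * w i x) \<in> left_kernel X R c"
proof -
  have "(\<Sum>x\<in>X. (\<Sum>i\<in>I. k i * w i x) * of_int (c x r)) = 0" if "r \<in> R" for r
  proof -
    have "(\<Sum>x\<in>X. (\<Sum>i\<in>I. k i * w i x) * of_int (c x r))
        = (\<Sum>i\<in>I. k i * (\<Sum>x\<in>X. w i x * of_int (c x r)))"
      by (simp add: sum_distrib_left sum_distrib_right mult.assoc sum.swap[of _ X])
    also have "\<dots> = 0" using assms that by (simp add: left_kernel_def)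
    finally show ?thesis .
  qed
  then show ?thesis by (simp add: left_kernel_def)
qed

lemma left_kernel_add:
  "u \<in> left_kernel X R c \<Longrightarrow> v \<in> left_kernel X R c \<Longrightarrow> (\<lambda>x. u x + v x) \<in> left_kernel X R c"
  by (simp add: left_kernel_def distrib_right sum.distrib)

lemma left_kernel_scale:
  "v \<in> left_kernel X R c \<Longrightarrow> (\<lambda>x. a * v x) \<in> left_kernel X R c"
  by (simp add: left_kernel_def mult.assoc flip: sum_distrib_left)

lemma left_kernel_of_int:
  "v \<in> left_kernel X R c \<Longrightarrow> (\<lambda>x. of_int (v x) :: 'a::comm_ring_1) \<in> left_kernel X R c"
  by (simp add: left_kernel_def flip: of_int_mult of_int_sum)

lemma ex_int_family_spanning_all:
  assumes "finite X"
  shows "\<exists>n W. \<forall>v :: 'x \<Rightarrow> 'a::ring_1. in_span_on X n W v"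
proof -
  obtain e where e: "bij_betw e {..<card X} X"
    using ex_bij_betw_nat_finite[OF assms] by (auto simp: atLeast0LessThan)
  have "in_span_on X (card X) (\<lambda>i x. if x = e i then 1 else 0) v" for v :: "'x \<Rightarrow> 'a"
    unfolding in_span_on_def
  proof (intro exI ballI)
    fix x assume "x \<in> X"
    have "(\<Sum>i<card X. v (e i) * of_int (if x = e i then 1 else 0))
        = (\<Sum>i<card X. (\<lambda>y. if x = y then v y else 0) (e i))"
      by (intro sum.cong) auto
    also have "\<dots> = (\<Sum>y\<in>X. if x = y then v y else 0)"
      by (rule sum.reindex_bij_betw[OF e])
    also have "\<dots> = v x" using \<open>x \<in> X\<close> assms by simp
    finally show "v x = (\<Sum>i<card X. v (e i) * of_int (if x = e i then 1 else 0))" by (rule sym)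
  qed
  then show ?thesis by blast
qed

(* With cc i the value of the new constraint r on W i, the vectors W' i = cc j W i - cc i W j
   satisfy it; a combination of the W i with coefficients t satisfies it iff sum_i t i cc i = 0,
   and then it is the combination of the W' i with coefficients t i / cc j. *)
lemma int_family_spanning_left_kernel_insert:
  fixes c :: "'x \<Rightarrow> 'r \<Rightarrow> int" and W :: "nat \<Rightarrow> 'x \<Rightarrow> int"
  assumes W: "\<And>i. i < n \<Longrightarrow> W i \<in> left_kernel X R c"
    and span: "\<And>v :: 'x \<Rightarrow> 'a::field_char_0. v \<in> left_kernel X R c \<Longrightarrow> in_span_on X n W v"
  shows "\<exists>W'. (\<forall>i<n. W' i \<in> left_kernel X (insert r R) c) \<and>
    (\<forall>v :: 'x \<Rightarrow> 'a. v \<in> left_kernel X (insert r R) c \<longrightarrow> in_span_on X n W' v)"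
proof -
  define cc where "cc i = (\<Sum>x\<in>X. W i x * c x r)" for i
  show ?thesis
  proof (cases "\<forall>i<n. cc i = 0")
    case True
    then show ?thesis using W span by (auto simp: left_kernel_insert cc_def)
  next
    case False
    then obtain j where j: "j < n" "cc j \<noteq> 0" by blast
    define W' where "W' i x = cc j * W i x - cc i * W j x" for i x
    have "W' i \<in> left_kernel X (insert r R) c" if "i < n" for i
    proof -
      have "W' i = (\<lambda>x. cc j * W i x + - cc i * W j x)"
        by (simp add: W'_def fun_eq_iff)
      then have "W' i \<in> left_kernel X R c"
        by (simp only:) (intro left_kernel_add left_kernel_scale W that j(1))
      moreover have "(\<Sum>x\<in>X. W' i x * c x r)
          = cc j * (\<Sum>x\<in>X. W i x * c x r) - cc i * (\<Sum>x\<in>X. W j x * c x r)"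
        by (simp add: W'_def sum_distrib_left sum_subtractf algebra_simps)
      ultimately show ?thesis by (simp add: left_kernel_insert cc_def)
    qed
    moreover have "in_span_on X n W' v" if v: "v \<in> left_kernel X (insert r R) c" for v :: "'x \<Rightarrow> 'a"
    proof -
      obtain t where t: "\<And>x. x \<in> X \<Longrightarrow> v x = (\<Sum>i<n. t i * of_int (W i x))"
        using span v unfolding left_kernel_insert in_span_on_def by blast
      have "0 = (\<Sum>x\<in>X. (\<Sum>i<n. t i * of_int (W i x)) * of_int (c x r))"
        using v t by (simp add: left_kernel_insert)
      also have "\<dots> = (\<Sum>i<n. t i * of_int (cc i))"
        by (simp add: cc_def sum_distrib_right sum_distrib_left mult.assoc sum.swap[of _ X])
      finally have tcc: "(\<Sum>i<n. t i * of_int (cc i)) = 0" ..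
      have "\<forall>x\<in>X. v x = (\<Sum>i<n. t i / of_int (cc j) * of_int (W' i x))"
      proof
        fix x assume "x \<in> X"
        have "(\<Sum>i<n. t i / of_int (cc j) * of_int (W' i x))
            = (\<Sum>i<n. t i * of_int (W i x) - t i * of_int (cc i) / of_int (cc j) * of_int (W j x))"
          using j(2) by (intro sum.cong) (auto simp: W'_def field_simps)
        also have "\<dots> = (\<Sum>i<n. t i * of_int (W i x))
            - (\<Sum>i<n. t i * of_int (cc i)) / of_int (cc j) * of_int (W j x)"
          by (simp add: sum_subtractf sum_divide_distrib sum_distrib_right)
        finally show "v x = (\<Sum>i<n. t i / of_int (cc j) * of_int (W' i x))"
          using t[OF \<open>x \<in> X\<close>] tcc by simp
      qed
      then show ?thesis by (rule in_span_onI)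
    qed
    ultimately show ?thesis by blast
  qed
qed

lemma ex_int_family_spanning_left_kernel:
  fixes c :: "'x \<Rightarrow> 'r \<Rightarrow> int"
  assumes "finite X" "finite R"
  shows "\<exists>n W. (\<forall>i<n. W i \<in> left_kernel X R c) \<and>
    (\<forall>v :: 'x \<Rightarrow> 'a::field_char_0. v \<in> left_kernel X R c \<longrightarrow> in_span_on X n W v)"
  using assms(2)
proof (induction R rule: finite_induct)
  case empty
  obtain n W where "\<forall>v :: 'x \<Rightarrow> 'a. in_span_on X n W v" using ex_int_family_spanning_all[OF assms(1)] by blast
  then show ?case by (auto simp: left_kernel_def)
next
  case (insert r R)
  then obtain n W where "\<forall>i<n. W i \<in> left_kernel X R c"
    "\<forall>v :: 'x \<Rightarrow> 'a. v \<in> left_kernel X R c \<longrightarrow> in_span_on X n W v" by blast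
  then show ?case using int_family_spanning_left_kernel_insert[of n W X R c r] by blast
qed

(* Scale by K and round the coefficients down: the rounding error at x is at most
   C x = sum_i |W i x|, and K is chosen with C x < K m x on all of X. *)
lemma ex_pos_int_combination:
  fixes m :: "'x \<Rightarrow> real" and W :: "nat \<Rightarrow> 'x \<Rightarrow> int"
  assumes "finite X" and pos: "\<And>x. x \<in> X \<Longrightarrow> 0 < m x" and "in_span_on X n W m"
  shows "\<exists>k. \<forall>x\<in>X. 0 < (\<Sum>i<n. k i * W i x)"
proof -
  obtain t where t: "\<And>x. x \<in> X \<Longrightarrow> m x = (\<Sum>i<n. t i * of_int (W i x))"
    using \<open>in_span_on X n W m\<close> unfolding in_span_on_def by blast
  define C where "C x = (\<Sum>i<n. \<bar>real_of_int (W i x)\<bar>)" for x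
  obtain K :: nat where K: "(\<Sum>x\<in>X. C x / m x) < K"
    using reals_Archimedean2 by blast
  have "\<forall>x\<in>X. 0 < (\<Sum>i<n. \<lfloor>K * t i\<rfloor> * W i x)"
  proof
    fix x assume x: "x \<in> X"
    have "C x / m x \<le> (\<Sum>x\<in>X. C x / m x)"
      using \<open>finite X\<close> x pos
      by (intro member_le_sum) (auto simp: C_def intro!: divide_nonneg_pos sum_nonneg)
    with K have "C x / m x < K" by linarith
    then have "C x < K * m x" using pos[OF x] by (simp add: pos_divide_less_eq mult.commute)
    also have "K * m x = (\<Sum>i<n. K * t i * of_int (W i x))"
      using t[OF x] by (simp add: sum_distrib_left mult.assoc)
    also have "\<dots> \<le> C x + real_of_int (\<Sum>i<n. \<lfloor>K * t i\<rfloor> * W i x)"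
    proof -
      have "K * t i * of_int (W i x) \<le> \<bar>of_int (W i x)\<bar> + of_int (\<lfloor>K * t i\<rfloor> * W i x)" for i
      proof -
        have "\<bar>K * t i - \<lfloor>K * t i\<rfloor>\<bar> \<le> 1" by linarith
        then have "\<bar>(K * t i - \<lfloor>K * t i\<rfloor>) * of_int (W i x)\<bar> \<le> \<bar>of_int (W i x)\<bar>"
          by (simp add: abs_mult mult_left_le_one_le)
        then show ?thesis by (simp add: algebra_simps)
      qed
      then have "(\<Sum>i<n. K * t i * of_int (W i x))
          \<le> (\<Sum>i<n. \<bar>of_int (W i x)\<bar> + of_int (\<lfloor>K * t i\<rfloor> * W i x))"
        by (intro sum_mono)
      then show ?thesis by (simp add: C_def sum.distrib)
    qed
    finally have "0 < real_of_int (\<Sum>i<n. \<lfloor>K * t i\<rfloor> * W i x)" by linarith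
    then show "0 < (\<Sum>i<n. \<lfloor>K * t i\<rfloor> * W i x)" by (simp only: of_int_0_less_iff)
  qed
  then show ?thesis by (rule exI[of _ "\<lambda>i. \<lfloor>K * t i\<rfloor>"])
qed

lemma conservative_ex_pos_int_left_kernel:
  fixes X :: "'x set"
  assumes "finite X" "finite R" "conservative X R sm sp"
  shows "\<exists>p :: 'x \<Rightarrow> int. (\<forall>x\<in>X. 0 < p x) \<and> p \<in> left_kernel X R (stoich sm sp)"
proof -
  obtain n W where W: "\<forall>i<n. W i \<in> left_kernel X R (stoich sm sp)"
    and span: "\<forall>v :: 'x \<Rightarrow> real. v \<in> left_kernel X R (stoich sm sp) \<longrightarrow> in_span_on X n W v"
    using ex_int_family_spanning_left_kernel[OF assms(1,2)] by blast
  obtain m :: "'x \<Rightarrow> real" where "\<forall>x\<in>X. 0 < m x" "m \<in> left_kernel X R (stoich sm sp)"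
    using assms(3) by (auto simp: conservative_def left_kernel_def)
  then obtain k where k: "\<forall>x\<in>X. 0 < (\<Sum>i<n. k i * W i x)"
    using ex_pos_int_combination[OF assms(1)] span by blast
  define p where "p = (\<lambda>x. \<Sum>i<n. k i * W i x)"
  have "p \<in> left_kernel X R (stoich sm sp)"
    unfolding p_def using W by (intro left_kernel_sum) auto
  moreover have "\<forall>x\<in>X. 0 < p x" using k by (simp add: p_def)
  ultimately show ?thesis by blast
qed

lemma sf_realizationI:
  fixes A :: "'a \<Rightarrow> 'x \<Rightarrow> nat"
  assumes "finite Atoms" "Atoms \<noteq> {}" "\<forall>x\<in>X. \<exists>a\<in>Atoms. A a x \<noteq> 0"
    and rows: "\<forall>a\<in>Atoms. (\<lambda>x. int (A a x)) \<in> left_kernel X R (stoich sm sp)"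
    and span: "\<forall>v. v \<in> left_kernel X R (stoich sm sp) \<longrightarrow>
      (\<exists>y. \<forall>x\<in>X. v x = (\<Sum>a\<in>Atoms. y a * real (A a x)))"
  shows "sf_realization X R sm sp Atoms A"
proof -
  have "sf_instance X R sm sp Atoms A"
    using assms(1-3) rows by (simp add: sf_instance_def left_kernel_def)
  moreover have "v \<in> left_kernel X R (stoich sm sp) \<longleftrightarrow>
      (\<exists>y. \<forall>x\<in>X. v x = (\<Sum>a\<in>Atoms. y a * real (A a x)))" for v :: "'x \<Rightarrow> real"
  proof
    assume "\<exists>y. \<forall>x\<in>X. v x = (\<Sum>a\<in>Atoms. y a * real (A a x))"
    then obtain y where y: "\<forall>x\<in>X. v x = (\<Sum>a\<in>Atoms. y a * real (A a x))" ..
    have "(\<lambda>x. \<Sum>a\<in>Atoms. y a * real_of_int (int (A a x))) \<in> left_kernel X R (stoich sm sp)"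
      using rows by (intro left_kernel_sum left_kernel_of_int) auto
    then show "v \<in> left_kernel X R (stoich sm sp)" by (rule left_kernel_cong) (simp add: y)
  qed (use span in blast)
  ultimately show ?thesis unfolding sf_realization_def by (simp add: left_kernel_def)
qed

definition shifted_rows :: "nat \<Rightarrow> int \<Rightarrow> ('x \<Rightarrow> int) \<Rightarrow> (nat \<Rightarrow> 'x \<Rightarrow> int) \<Rightarrow> nat \<Rightarrow> 'x \<Rightarrow> nat" where
  "shifted_rows d N p W a x = nat (if a = 0 then int d * p x else W (a - 1) x + N * p x)"

lemma shifted_rows_0: "shifted_rows d N p W 0 x = d * nat (p x)"
  by (simp add: shifted_rows_def nat_mult_distrib)

lemma shifted_rows_Suc: "shifted_rows d N p W (Suc i) x = nat (W i x + N * p x)"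
  by (simp add: shifted_rows_def)

lemma sf_realization_shifted_rows:
  fixes p :: "'x \<Rightarrow> int" and W :: "nat \<Rightarrow> 'x \<Rightarrow> int" and d :: nat
  assumes p: "\<forall>x\<in>X. 0 < p x" "p \<in> left_kernel X R (stoich sm sp)"
    and W: "\<forall>i<n. W i \<in> left_kernel X R (stoich sm sp)"
    and span: "\<forall>v :: 'x \<Rightarrow> real. v \<in> left_kernel X R (stoich sm sp) \<longrightarrow> in_span_on X n W v"
    and "0 < d" and N: "\<forall>x\<in>X. \<forall>i<n. 0 \<le> W i x + N * p x"
  shows "sf_realization X R sm sp {..n} (shifted_rows d N p W)"
proof (rule sf_realizationI)
  let ?A = "shifted_rows d N p W"
  have A0: "int (?A 0 x) = int d * p x" if "x \<in> X" for x
    using p(1) that by (simp add: shifted_rows_0 less_imp_le)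
  have AS: "int (?A (Suc i) x) = W i x + N * p x" if "x \<in> X" "i < n" for x i
    using N that by (simp add: shifted_rows_Suc)
  show "\<forall>x\<in>X. \<exists>a\<in>{..n}. ?A a x \<noteq> 0"
  proof
    fix x assume "x \<in> X"
    then have "?A 0 x \<noteq> 0" using p(1)[rule_format, OF \<open>x \<in> X\<close>] \<open>0 < d\<close> by (simp add: shifted_rows_0)
    then show "\<exists>a\<in>{..n}. ?A a x \<noteq> 0" by (metis atMost_iff le0)
  qed
  show "\<forall>a\<in>{..n}. (\<lambda>x. int (?A a x)) \<in> left_kernel X R (stoich sm sp)"
  proof
    fix a assume "a \<in> {..n}"
    then consider "a = 0" | i where "a = Suc i" "i < n" by (cases a) auto
    then show "(\<lambda>x. int (?A a x)) \<in> left_kernel X R (stoich sm sp)"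
    proof cases
      case 1
      show ?thesis
        by (rule left_kernel_cong[OF left_kernel_scale[OF p(2), where a = "int d"]]) (simp only: 1 A0)
    next
      case 2
      show ?thesis
        by (rule left_kernel_cong[OF left_kernel_add[OF W[rule_format, OF \<open>i < n\<close>]
              left_kernel_scale[OF p(2), where a = N]]]) (simp only: 2 AS \<open>i < n\<close>)
    qed
  qed
  show "\<forall>v. v \<in> left_kernel X R (stoich sm sp) \<longrightarrow>
      (\<exists>y. \<forall>x\<in>X. v x = (\<Sum>a\<in>{..n}. y a * real (?A a x)))"
  proof (intro allI impI)
    fix v :: "'x \<Rightarrow> real" assume "v \<in> left_kernel X R (stoich sm sp)"
    then obtain s where s: "\<And>x. x \<in> X \<Longrightarrow> v x = (\<Sum>i<n. s i * of_int (W i x))"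
      using span unfolding in_span_on_def by blast
    (* sum_i s i W i = sum_i s i (W i + N p) - (N sum_i s i / d) (d p) *)
    define y where "y a = (if a = 0 then - (N * sum s {..<n}) / d else s (a - 1))" for a
    have "v x = (\<Sum>a\<in>{..n}. y a * real (?A a x))" if x: "x \<in> X" for x
    proof -
      have "(\<Sum>a\<in>{..n}. y a * real (?A a x))
          = y 0 * of_int (int (?A 0 x)) + (\<Sum>i<n. y (Suc i) * of_int (int (?A (Suc i) x)))"
        by (subst lessThan_Suc_atMost[symmetric]) (simp only: sum.lessThan_Suc_shift of_int_of_nat_eq)
      also have "\<dots> = - (N * sum s {..<n}) * p x + (\<Sum>i<n. s i * (W i x + N * p x))"
        using \<open>0 < d\<close> x by (simp add: y_def A0 AS)
      also have "\<dots> = v x"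
        by (simp add: s[OF x] algebra_simps sum.distrib sum_distrib_left)
      finally show ?thesis by simp
    qed
    then show "\<exists>y. \<forall>x\<in>X. v x = (\<Sum>a\<in>{..n}. y a * real (?A a x))" by blast
  qed
qed simp_all

lemma conservative_ex_sf_realization:
  fixes X :: "'x set" and d :: nat
  assumes "reaction_network X R" "conservative X R sm sp" "0 < d"
  shows "\<exists>n (A :: nat \<Rightarrow> 'x \<Rightarrow> nat). sf_realization X R sm sp {..n} A \<and>
    (\<forall>x\<in>X. 0 < A 0 x \<and> d dvd A 0 x)"
proof -
  have fin: "finite X" "finite R" using assms(1) by (auto simp: reaction_network_def)
  obtain p :: "'x \<Rightarrow> int" where p: "\<forall>x\<in>X. 0 < p x" "p \<in> left_kernel X R (stoich sm sp)"
    using conservative_ex_pos_int_left_kernel[OF fin assms(2)] by blast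
  obtain n W where W: "\<forall>i<n. W i \<in> left_kernel X R (stoich sm sp)"
    and span: "\<forall>v :: 'x \<Rightarrow> real. v \<in> left_kernel X R (stoich sm sp) \<longrightarrow> in_span_on X n W v"
    using ex_int_family_spanning_left_kernel[OF fin] by blast
  define N where "N = (\<Sum>x\<in>X. \<Sum>i<n. \<bar>W i x\<bar>)"
  have "0 \<le> N" unfolding N_def by (intro sum_nonneg) auto
  have "0 \<le> W i x + N * p x" if "x \<in> X" "i < n" for x i
  proof -
    have "\<bar>W i x\<bar> \<le> (\<Sum>i<n. \<bar>W i x\<bar>)" using that by (intro member_le_sum) auto
    also have "\<dots> \<le> N" unfolding N_def using that fin by (intro member_le_sum) (auto intro: sum_nonneg)
    also have "\<dots> \<le> N * p x"
      using p(1) that \<open>0 \<le> N\<close> mult_left_mono[of 1 "p x" N] by force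
    finally show ?thesis by linarith
  qed
  then have "sf_realization X R sm sp {..n} (shifted_rows d N p W)"
    using sf_realization_shifted_rows[OF p W span assms(3)] by blast
  moreover have "\<forall>x\<in>X. 0 < shifted_rows d N p W 0 x \<and> d dvd shifted_rows d N p W 0 x"
    using p(1) assms(3) by (simp add: shifted_rows_0)
  ultimately show ?thesis by blast
qed

section \<open>Loops in coloured multigraphs\<close>

definition perm_graph :: "'v set \<Rightarrow> ('v \<Rightarrow> 'v) \<Rightarrow> ('v \<Rightarrow> 'a) \<Rightarrow> ('v, 'a) cmgraph" where
  "perm_graph V f c = \<lparr>verts = V, edges = image_mset (\<lambda>v. {#v, f v#}) (mset_set V), colour = c\<rparr>"

lemma verts_perm_graph [simp]: "verts (perm_graph V f c) = V"
  and colour_perm_graph [simp]: "colour (perm_graph V f c) = c"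
  by (simp_all add: perm_graph_def)

lemma wf_perm_graph: "finite V \<Longrightarrow> f ` V \<subseteq> V \<Longrightarrow> wf_cmgraph (perm_graph V f c)"
  by (auto simp: wf_cmgraph_def perm_graph_def)

lemma degree_perm_graph:
  assumes "finite V" "bij_betw f V V" "u \<in> V"
  shows "degree (perm_graph V f c) u = 2"
proof -
  have "degree (perm_graph V f c) u = (\<Sum>v\<in>V. count {#v, f v#} u)"
    by (simp add: degree_def perm_graph_def sum_unfold_sum_mset image_mset.compositionality o_def)
  also have "\<dots> = (\<Sum>v\<in>V. (if v = u then 1 else 0) + (if f v = u then 1 else 0))"
    by (intro sum.cong) auto
  also have "\<dots> = 1 + (\<Sum>v\<in>V. if f v = u then 1 else 0)"
    using assms(1,3) by (simp add: sum.distrib)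
  also have "(\<Sum>v\<in>V. if f v = u then 1 else 0) = (\<Sum>w\<in>V. if w = u then 1 else (0::nat))"
    by (rule sum.reindex_bij_betw[OF assms(2)])
  finally show ?thesis using assms(1,3) by simp
qed

lemma loop_mset_eq_iff: "{#u, u#} = {#v, w#} \<longleftrightarrow> v = u \<and> w = u"
  by (auto simp: add_eq_conv_ex)

lemma loop_in_perm_graph:
  "finite V \<Longrightarrow> {#u, u#} \<in># edges (perm_graph V f c) \<longleftrightarrow> u \<in> V \<and> f u = u"
  by (auto simp: perm_graph_def loop_mset_eq_iff)

definition loop_verts :: "('v, 'a) cmgraph \<Rightarrow> 'a \<Rightarrow> 'v set" where
  "loop_verts G a = {u \<in> verts G. colour G u = a \<and> {#u, u#} \<in># edges G}"

lemma image_mset_eq_loop_iff: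
  assumes "size e = 2" "inj_on f (insert u (set_mset e))"
  shows "image_mset f e = {#f u, f u#} \<longleftrightarrow> e = {#u, u#}"
proof -
  have "size e = Suc (Suc 0)" using assms(1) by simp
  then obtain v B where "e = {#v#} + B" "size B = Suc 0" by (rule size_mset_SucE)
  moreover obtain w where "B = {#w#}"
    using \<open>size B = Suc 0\<close> size_1_singleton_mset by auto
  ultimately have e: "e = {#v, w#}" by simp
  have in_e: "v \<in> insert u (set_mset e)" "w \<in> insert u (set_mset e)" "u \<in> insert u (set_mset e)"
    by (simp_all add: e)
  have "f v = f u \<longleftrightarrow> v = u" "f w = f u \<longleftrightarrow> w = u"
    by (rule inj_on_eq_iff[OF assms(2) in_e(1,3)], rule inj_on_eq_iff[OF assms(2) in_e(2,3)])
  moreover have "image_mset f e = {#f u, f u#} \<longleftrightarrow> f v = f u \<and> f w = f u"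
    using loop_mset_eq_iff[of "f u" "f v" "f w"] by (auto simp: e)
  moreover have "e = {#u, u#} \<longleftrightarrow> v = u \<and> w = u"
    using loop_mset_eq_iff[of u v w] by (auto simp: e)
  ultimately show ?thesis by simp
qed

lemma cmg_iso_card_loop_verts:
  assumes "cmg_iso G H" "wf_cmgraph G"
  shows "card (loop_verts G a) = card (loop_verts H a)"
proof -
  obtain f where f: "bij_betw f (verts G) (verts H)" "\<forall>u\<in>verts G. colour H (f u) = colour G u"
    and edges: "image_mset (image_mset f) (edges G) = edges H"
    using assms(1) unfolding cmg_iso_def by blast
  have inj: "inj_on f (verts G)" using f(1) by (rule bij_betw_imp_inj_on)
  have loop: "{#f u, f u#} \<in># edges H \<longleftrightarrow> {#u, u#} \<in># edges G" if "u \<in> verts G" for u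
  proof -
    have double: "image_mset f e = {#f u, f u#} \<longleftrightarrow> e = {#u, u#}" if "e \<in># edges G" for e
    proof -
      have "size e = 2" "insert u (set_mset e) \<subseteq> verts G"
        using assms(2) that \<open>u \<in> verts G\<close> by (auto simp: wf_cmgraph_def)
      then show ?thesis by (rule image_mset_eq_loop_iff[OF _ inj_on_subset[OF inj]])
    qed
    show ?thesis
    proof
      assume "{#f u, f u#} \<in># edges H"
      then obtain e where "e \<in># edges G" "image_mset f e = {#f u, f u#}"
        unfolding edges[symmetric] by auto
      then show "{#u, u#} \<in># edges G" using double by auto
    next
      assume "{#u, u#} \<in># edges G"
      then have "image_mset f {#u, u#} \<in># edges H"
        unfolding edges[symmetric] in_image_mset by (rule imageI)
      then show "{#f u, f u#} \<in># edges H" by simp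
    qed
  qed
  have "bij_betw f (loop_verts G a) (loop_verts H a)"
    unfolding loop_verts_def using f(2) loop by (intro bij_betw_Collect[OF f(1)]) auto
  then show ?thesis by (rule bij_betw_same_card)
qed

definition pair_up_from :: "nat \<Rightarrow> nat \<Rightarrow> nat" where
  "pair_up_from l j = (if j < l then j else if even j then Suc j else j - 1)"

lemma pair_up_from_less: "even l \<Longrightarrow> even K \<Longrightarrow> j < K \<Longrightarrow> pair_up_from l j < K"
  unfolding pair_up_from_def by presburger

lemma pair_up_from_pair_up_from: "even l \<Longrightarrow> pair_up_from l (pair_up_from l j) = j"
  unfolding pair_up_from_def by presburger

lemma pair_up_from_eq_iff: "pair_up_from l j = j \<longleftrightarrow> j < l"
  unfolding pair_up_from_def by presburger

(* Vertex prod_encode (a, j) is the j-th vertex of colour a.  A vertex of colour 0 and index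
   j >= l is joined by a double edge to its partner j + 1 (j even) or j - 1 (j odd); every other
   vertex carries a loop. *)
definition coloured_verts :: "nat \<Rightarrow> (nat \<Rightarrow> nat) \<Rightarrow> nat set" where
  "coloured_verts n k = prod_encode ` (SIGMA a:{..n}. {..<k a})"

definition pair_up_colour0 :: "nat \<Rightarrow> nat \<Rightarrow> nat" where
  "pair_up_colour0 l u = (case prod_decode u of (a, j) \<Rightarrow> prod_encode (a, if a = 0 then pair_up_from l j else j))"

lemma finite_coloured_verts: "finite (coloured_verts n k)"
  by (simp add: coloured_verts_def)

lemma bij_pair_up_colour0:
  assumes "even l" "even (k 0)"
  shows "bij_betw (pair_up_colour0 l) (coloured_verts n k) (coloured_verts n k)"
proof -
  have maps: "pair_up_colour0 l ` coloured_verts n k \<subseteq> coloured_verts n k"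
    using assms by (auto simp: coloured_verts_def pair_up_colour0_def pair_up_from_less)
  have "\<forall>u\<in>coloured_verts n k. pair_up_colour0 l (pair_up_colour0 l u) = u"
    using assms by (auto simp: coloured_verts_def pair_up_colour0_def pair_up_from_pair_up_from)
  with maps show ?thesis by (intro bij_betw_byWitness) auto
qed

lemma card_colour_coloured_verts:
  assumes "a \<le> n"
  shows "card {u \<in> coloured_verts n k. fst (prod_decode u) = a} = k a"
proof -
  have "{u \<in> coloured_verts n k. fst (prod_decode u) = a} = prod_encode ` ({a} \<times> {..<k a})"
    using assms by (auto simp: coloured_verts_def)
  also have "card \<dots> = k a"
    by (simp add: card_image[OF inj_prod_encode] card_cartesian_product)
  finally show ?thesis .
qed

lemma colour0_fixed_points_pair_up_colour0:
  assumes "l \<le> k 0"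
  shows "{u \<in> coloured_verts n k. fst (prod_decode u) = 0 \<and> pair_up_colour0 l u = u}
    = prod_encode ` ({0} \<times> {..<l})"
  using assms
  by (auto simp: coloured_verts_def pair_up_colour0_def pair_up_from_eq_iff prod_encode_eq image_iff)

definition coloured_loop_graph :: "nat \<Rightarrow> (nat \<Rightarrow> nat) \<Rightarrow> nat \<Rightarrow> (nat, nat) cmgraph" where
  "coloured_loop_graph n k l = perm_graph (coloured_verts n k) (pair_up_colour0 l) (\<lambda>u. fst (prod_decode u))"

lemma wf_coloured_loop_graph: "even l \<Longrightarrow> even (k 0) \<Longrightarrow> wf_cmgraph (coloured_loop_graph n k l)"
  unfolding coloured_loop_graph_def using bij_pair_up_colour0[of l k n]
  by (intro wf_perm_graph finite_coloured_verts) (simp add: bij_betw_def)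

lemma degree_coloured_loop_graph:
  "even l \<Longrightarrow> even (k 0) \<Longrightarrow> u \<in> verts (coloured_loop_graph n k l) \<Longrightarrow>
    degree (coloured_loop_graph n k l) u = 2"
  unfolding coloured_loop_graph_def
  by (intro degree_perm_graph finite_coloured_verts bij_pair_up_colour0) simp_all

lemma colour_coloured_loop_graph:
  "colour (coloured_loop_graph n k l) ` verts (coloured_loop_graph n k l) \<subseteq> {..n}"
  by (auto simp: coloured_loop_graph_def coloured_verts_def)

lemma lewis_matrix_coloured_loop_graph:
  "a \<le> n \<Longrightarrow> lewis_matrix (\<lambda>x. coloured_loop_graph n (k x) (l x)) a x = k x a"
  by (simp add: lewis_matrix_def coloured_loop_graph_def card_colour_coloured_verts)

lemma card_loop_verts_coloured_loop_graph:
  assumes "l \<le> k 0"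
  shows "card (loop_verts (coloured_loop_graph n k l) 0) = l"
proof -
  have "loop_verts (coloured_loop_graph n k l) 0
      = {u \<in> coloured_verts n k. fst (prod_decode u) = 0 \<and> pair_up_colour0 l u = u}"
    by (auto simp: loop_verts_def coloured_loop_graph_def loop_in_perm_graph finite_coloured_verts)
  also have "\<dots> = prod_encode ` ({0} \<times> {..<l})"
    using assms by (rule colour0_fixed_points_pair_up_colour0)
  finally show ?thesis
    by (simp add: card_image[OF inj_prod_encode] card_cartesian_product)
qed

lemma sf_realization_cong:
  assumes "\<And>a x. a \<in> Atoms \<Longrightarrow> x \<in> X \<Longrightarrow> A a x = B a x"
  shows "sf_realization X R sm sp Atoms A \<longleftrightarrow> sf_realization X R sm sp Atoms B"
  using assms unfolding sf_realization_def sf_instance_def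
  by (simp cong: sum.cong ball_cong bex_cong conj_cong)

lemma lewis_realizationI:
  assumes "sf_realization X R sm sp Atoms A" "\<forall>a\<in>Atoms. 1 \<le> val a"
    and "\<forall>x\<in>X. wf_cmgraph (\<Gamma> x) \<and> colour (\<Gamma> x) ` verts (\<Gamma> x) \<subseteq> Atoms \<and>
      (\<forall>u\<in>verts (\<Gamma> x). degree (\<Gamma> x) u = val (colour (\<Gamma> x) u))"
    and "\<forall>x\<in>X. \<forall>a\<in>Atoms. lewis_matrix \<Gamma> a x = A a x"
  shows "lewis_realization X R sm sp Atoms val \<Gamma>"
proof -
  have "sf_realization X R sm sp Atoms (lewis_matrix \<Gamma>)"
    using assms(1,4) sf_realization_cong[of Atoms X "lewis_matrix \<Gamma>" A] by blast
  then show ?thesis using assms(2,3) unfolding lewis_realization_def lewis_instance_def sf_realization_def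
    by blast
qed

lemma lewis_realization_coloured_loop_graphs:
  fixes A :: "nat \<Rightarrow> 'x \<Rightarrow> nat" and idx :: "'x \<Rightarrow> nat"
  assumes A: "sf_realization X R sm sp {..n} A" and idx: "inj_on idx X"
    and A0: "\<forall>x\<in>X. even (A 0 x) \<and> 2 * idx x \<le> A 0 x"
  defines "\<Gamma> \<equiv> \<lambda>x. coloured_loop_graph n (\<lambda>a. A a x) (2 * idx x)"
  shows "lewis_realization X R sm sp {..n} (\<lambda>_. 2) \<Gamma>"
    and "\<forall>x\<in>X. \<forall>y\<in>X. x \<noteq> y \<longrightarrow> \<not> cmg_iso (\<Gamma> x) (\<Gamma> y)"
proof -
  have graphs: "\<forall>x\<in>X. wf_cmgraph (\<Gamma> x) \<and> colour (\<Gamma> x) ` verts (\<Gamma> x) \<subseteq> {..n} \<and>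
      (\<forall>u\<in>verts (\<Gamma> x). degree (\<Gamma> x) u = 2)"
    using A0 by (simp add: \<Gamma>_def wf_coloured_loop_graph degree_coloured_loop_graph
        colour_coloured_loop_graph)
  have counts: "\<forall>x\<in>X. \<forall>a\<in>{..n}. lewis_matrix \<Gamma> a x = A a x"
    by (simp add: \<Gamma>_def lewis_matrix_coloured_loop_graph)
  show "lewis_realization X R sm sp {..n} (\<lambda>_. 2) \<Gamma>"
    by (rule lewis_realizationI[OF A _ graphs counts]) simp
  show "\<forall>x\<in>X. \<forall>y\<in>X. x \<noteq> y \<longrightarrow> \<not> cmg_iso (\<Gamma> x) (\<Gamma> y)"
  proof (intro ballI impI notI)
    fix x y assume xy: "x \<in> X" "y \<in> X" "x \<noteq> y" and "cmg_iso (\<Gamma> x) (\<Gamma> y)"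
    then have "card (loop_verts (\<Gamma> x) 0) = card (loop_verts (\<Gamma> y) 0)"
      using graphs by (intro cmg_iso_card_loop_verts) simp_all
    then have "idx x = idx y"
      using A0 xy by (simp add: \<Gamma>_def card_loop_verts_coloured_loop_graph)
    then show False using idx xy by (auto dest: inj_onD)
  qed
qed

theorem proposition14:
  fixes X :: "'x set" and R :: "'r set" and sm sp :: "'x \<Rightarrow> 'r \<Rightarrow> nat"
  assumes "reaction_network X R"
    and "closed_RN X R sm sp"
    and "conservative X R sm sp"
  shows "\<exists>(Atoms :: nat set) (val :: nat \<Rightarrow> nat) (\<Gamma> :: 'x \<Rightarrow> (nat, nat) cmgraph).
           lewis_realization X R sm sp Atoms val \<Gamma> \<and>
           (\<forall>x\<in>X. \<forall>y\<in>X. x \<noteq> y \<longrightarrow> \<not> cmg_iso (\<Gamma> x) (\<Gamma> y))"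
proof -
  have X: "finite X" "0 < 2 * card X" using assms(1) by (auto simp: reaction_network_def card_gt_0_iff)
  then obtain n :: nat and A where A: "sf_realization X R sm sp {..n} A"
    and A0: "\<forall>x\<in>X. 0 < A 0 x \<and> 2 * card X dvd A 0 x"
    using conservative_ex_sf_realization[OF assms(1,3)] by blast
  obtain idx where idx: "bij_betw idx X {..<card X}"
    using ex_bij_betw_finite_nat[OF X(1)] by (auto simp: atLeast0LessThan)
  have "even (A 0 x) \<and> 2 * idx x \<le> A 0 x" if "x \<in> X" for x
  proof -
    have "idx x < card X" using idx that by (auto simp: bij_betw_def)
    moreover have "2 * card X \<le> A 0 x" using A0 that by (auto intro: dvd_imp_le)
    moreover have "even (A 0 x)" using A0 that by (auto intro: dvd_mult_left)
    ultimately show ?thesis by linarith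
  qed
  then show ?thesis
    using lewis_realization_coloured_loop_graphs[OF A bij_betw_imp_inj_on[OF idx]] by blast
qed

end
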